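(* Fix $0<\rho<1$. For $t\in(0,1]$ write $c=\sqrt{t}$ and define $$\begin{aligned}T(t)={}&\frac{2(1+\rho^2-\frac{2}{3}\rho^2 c^2)^{\frac{3}{2}}}{3\rho^2c^2}+\frac{7}{6}-\frac{\rho^2}{10}+\frac{2\rho^2c^2}{15} +\Big(\frac{1}{6}-\frac{7(1+\rho^2)}{30\rho^2c^2}\Big)\Big(\sqrt{1+\rho^2-2\rho c}+\sqrt{1+\rho^2+2\rho c}\Big)\\&+\Big(\frac{\rho c}{12}-\frac{10\rho^2+1}{60\rho c}+\frac{(1+\rho^2)^2}{10\rho^3c^3}\Big)\Big(\sqrt{1+\rho^2-2\rho c}-\sqrt{1+\rho^2+2\rho c}\Big).\end{aligned}$$ Then the left derivative of $T$ at $t=1$ exists and satisfies $T'_{-}(1)\ge 0$. *)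

theory Defs
  imports "HOL-Analysis.Analysis"
begin

definition T :: "real \<Rightarrow> real \<Rightarrow> real" where
  "T \<rho> t = (let c = sqrt t in
      2 * (1 + \<rho>^2 - 2/3 * \<rho>^2 * c^2) powr (3/2) / (3 * \<rho>^2 * c^2)
      + 7/6 - \<rho>^2/10 + 2 * \<rho>^2 * c^2 / 15
      + (1/6 - 7 * (1 + \<rho>^2) / (30 * \<rho>^2 * c^2))
          * (sqrt (1 + \<rho>^2 - 2*\<rho>*c) + sqrt (1 + \<rho>^2 + 2*\<rho>*c))
      + (\<rho>*c/12 - (10*\<rho>^2 + 1)/(60*\<rho>*c) + (1 + \<rho>^2)^2 / (10 * \<rho>^3 * c^3))
          * (sqrt (1 + \<rho>^2 - 2*\<rho>*c) - sqrt (1 + \<rho>^2 + 2*\<rho>*c)))"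

end

theory Submission
  imports Defs
begin

text \<open>
  All square roots occurring in \<open>T \<rho>\<close> have positive arguments at \<open>t = 1\<close>, where
  \<open>sqrt (1 + \<rho>\<^sup>2 \<mp> 2\<rho>) = 1 \<mp> \<rho>\<close>, so \<open>T \<rho>\<close> is differentiable there (from both sides).
  With \<open>u = \<rho>\<^sup>2\<close> the derivative simplifies to
  \<open>(40 + 60u + 11u\<^sup>2 - 40/3 (3 + 4u) sqrt (1 + u/3)) / (60u)\<close>; the terms with
  \<open>1/(1 - \<rho>\<^sup>2)\<close> cancel. The numerator is nonnegative since the difference of the squares
  of its two parts is \<open>(5760u\<^sup>2 + 10040u\<^sup>3 + 3267u\<^sup>4) / 27\<close>.
\<close>

lemma powr_three_halves:
  fixes x :: real
  assumes "0 \<le> x"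
  shows "x powr (3/2) = x * sqrt x"
proof -
  have "x powr (3/2) = x powr (1 + 1/2)" by simp
  also have "\<dots> = x * sqrt x"
    unfolding powr_add using assms by (simp add: powr_half_sqrt)
  finally show ?thesis .
qed

lemma mult_sqrt_one_plus_third_le:
  fixes u :: real
  assumes "0 \<le> u"
  shows "40/3 * (3 + 4*u) * sqrt (1 + u/3) \<le> 40 + 60*u + 11*u^2"
proof (rule power2_le_imp_le)
  have sqrt_sq: "sqrt (1 + u/3)^2 = 1 + u/3" using assms by simp
  have "(40 + 60*u + 11*u^2)^2 - (40/3 * (3 + 4*u) * sqrt (1 + u/3))^2
      = (5760*u^2 + 10040*u^3 + 3267*u^4) / 27"
    unfolding power_mult_distrib sqrt_sq
    by (simp add: field_simps power2_eq_square power3_eq_cube power4_eq_xxxx)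
  also have "\<dots> \<ge> 0" using assms by simp
  finally show "(40/3 * (3 + 4*u) * sqrt (1 + u/3))^2 \<le> (40 + 60*u + 11*u^2)^2" by simp
  show "0 \<le> 40 + 60*u + 11*u^2" using assms by simp
qed

lemma T_has_real_derivative_at_1:
  fixes \<rho> :: real
  assumes "0 < \<rho>" and "\<rho> < 1"
  shows "(T \<rho> has_real_derivative
           (40 + 60*\<rho>^2 + 11*\<rho>^4 - 40/3 * (3 + 4*\<rho>^2) * sqrt (1 + \<rho>^2/3)) / (60*\<rho>^2)) (at 1)"
proof -
  \<comment> \<open>With \<open>1 \<mp> \<rho>\<close> as atoms, field_simps can clear these denominators.\<close>
  define a b where "a = 1 - \<rho>" and "b = 1 + \<rho>"
  have "0 < a" "0 < b" using assms by (simp_all add: a_def b_def)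
  moreover have "1 + \<rho>^2 - 2*\<rho> = a^2" "1 + \<rho>^2 + 2*\<rho> = b^2"
    by (simp_all add: a_def b_def power2_eq_square algebra_simps)
  ultimately have sqrt_a: "sqrt (1 + \<rho>^2 - 2*\<rho>) = a" and sqrt_b: "sqrt (1 + \<rho>^2 + 2*\<rho>) = b"
    and "0 < 1 + \<rho>^2 - 2*\<rho>" "0 < 1 + \<rho>^2 + 2*\<rho>"
    by simp_all
  have powr_S: "(\<rho>^2/3 + 1) powr (1/2) = sqrt (1 + \<rho>^2/3)"
    "(\<rho>^2/3 + 1) powr (3/2) = (1 + \<rho>^2/3) * sqrt (1 + \<rho>^2/3)"
    by (simp_all add: powr_half_sqrt powr_three_halves add.commute)
  show ?thesis
    unfolding T_def[abs_def] Let_def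
    apply (rule DERIV_cong)
     apply (auto intro!: derivative_eq_intros)
    using assms \<open>0 < 1 + \<rho>^2 - 2*\<rho>\<close> \<open>0 < 1 + \<rho>^2 + 2*\<rho>\<close> apply auto
    apply (simp only: powr_S sqrt_a sqrt_b)
    using assms \<open>0 < a\<close> \<open>0 < b\<close> apply (simp add: field_simps)
    unfolding a_def b_def by algebra
qed

theorem lemma7:
  fixes \<rho> :: real
  assumes "0 < \<rho>" and "\<rho> < 1"
  shows "\<exists>D. (T \<rho> has_real_derivative D) (at 1 within {0<..1}) \<and> D \<ge> 0"
proof (intro exI conjI)
  show "(T \<rho> has_real_derivative
          (40 + 60*\<rho>^2 + 11*\<rho>^4 - 40/3 * (3 + 4*\<rho>^2) * sqrt (1 + \<rho>^2/3)) / (60*\<rho>^2))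
        (at 1 within {0<..1})"
    using T_has_real_derivative_at_1[OF assms] by (rule has_field_derivative_at_within)
  have "40/3 * (3 + 4*\<rho>^2) * sqrt (1 + \<rho>^2/3) \<le> 40 + 60*\<rho>^2 + 11*\<rho>^4"
    using mult_sqrt_one_plus_third_le[of "\<rho>^2"] by (simp flip: power_mult)
  then show "0 \<le> (40 + 60*\<rho>^2 + 11*\<rho>^4 - 40/3 * (3 + 4*\<rho>^2) * sqrt (1 + \<rho>^2/3)) / (60*\<rho>^2)"
    by simp
qed

end
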